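(* Let $d\ge1$, $s\in[1/2,1)$, $L_0\ge 2$, and let $u:B_1\to\mathbb{R}$ be Lipschitz with $|u|\le 1$ and $\|\nabla u\|_{L^\infty(B_1)}\le L_0$, where $B_1\subset\mathbb{R}^d$ is the unit ball. Then $$\int_{B_1}\int_{B_1}\frac{|u(x)-u(y)|^2}{|x-y|^{d+2s}}\,dx\,dy\le\frac{1}{1-s}\,d\,\omega_d\,L_0^{2s-1}\Big((2-2s)\log(2L_0)+1\Big)\int_{B_1}|\nabla u(x)|\,dx,$$ where $\omega_d$ is the volume of the unit ball in $\mathbb{R}^d$. In particular the left side is at most $C(d,s)L_0^{2s-1}\log(L_0)\int_{B_1}|\nabla u|\,dx$. *)

theory Defs
  imports "HOL-Analysis.Analysis"
begin

end

theory Submission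
  imports Defs
begin

text \<open>For \<open>x, y\<close> in the ball, \<open>\<bar>u x - u y\<bar> \<le> min 2 (L0 \<bar>x - y\<bar>)\<close>, and for almost every \<open>y\<close>
  also \<open>\<bar>u x - u y\<bar> \<le> \<bar>x - y\<bar> \<integral>\<^sub>0\<^sup>1 \<bar>\<nabla>u (x + t (y - x))\<bar> dt\<close>, by the fundamental theorem of
  calculus along the segment. Multiplying the two bounds, substituting \<open>h = y - x\<close> and using Fubini
  and translation invariance splits the double integral into \<open>\<integral> \<bar>\<nabla>u\<bar>\<close> times the integral of the
  kernel \<open>min 2 (L0 \<bar>h\<bar>) \<bar>h\<bar>\<^bsup>1 - d - 2s\<^esup>\<close> over \<open>\<bar>h\<bar> < 2\<close>. In polar coordinates this is a
  one-dimensional integral, which the split at \<open>\<bar>h\<bar> = 2 / L0\<close> bounds by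
  \<open>d \<omega>\<^sub>d L0\<^bsup>2s - 1\<^esup> (1 / (1 - s) + 2 log L0)\<close>.\<close>

section \<open>Polar coordinates for radial integrands\<close>

lemma has_integral_of_nat_mult_power:
  fixes a b :: real
  assumes "a \<le> b"
  shows "((\<lambda>r. real d * r ^ (d - 1)) has_integral (b ^ d - a ^ d)) {a..b}"
proof -
  have "((\<lambda>r. real d * r ^ (d - 1)) has_integral ((\<lambda>r. r ^ d) b - (\<lambda>r. r ^ d) a)) {a..b}"
    by (rule fundamental_theorem_of_calculus[OF assms])
       (auto simp: has_real_derivative_iff_has_vector_derivative[symmetric] intro!: derivative_eq_intros)
  then show ?thesis by simp
qed

lemma emeasure_ball_diff_cball:
  assumes R: "R > 0"
  defines "w \<equiv> measure lborel (ball (0::'a::euclidean_space) 1)"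
  shows "emeasure lborel (ball (0::'a) R - cball 0 x)
       = ennreal (w * R ^ DIM('a) - w * (max 0 (min x R)) ^ DIM('a))"
proof -
  have w0: "w \<ge> 0" unfolding w_def by simp
  have ball: "emeasure lborel (ball (0::'a) r) = ennreal (w * r ^ DIM('a))" if "r \<ge> 0" for r
    using content_ball_conv_unit_ball[of r "0::'a"] that emeasure_lborel_ball_finite[of "0::'a" r]
    by (simp add: emeasure_eq_ennreal_measure w_def mult.commute)
  have cball: "emeasure lborel (cball (0::'a) r) = ennreal (w * r ^ DIM('a))" if "r \<ge> 0" for r
    using ball[OF that] emeasure_cball[OF that, of "0::'a"] emeasure_ball[OF that, of "0::'a"] by simp
  consider "x < 0" | "0 \<le> x" "x < R" | "R \<le> x" by linarith
  then show ?thesis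
  proof cases
    case 1
    then have "ball (0::'a) R - cball 0 x = ball 0 R" by auto
    then show ?thesis using 1 R ball[of R] by (simp add: power_0_left)
  next
    case 2
    have "emeasure lborel (ball (0::'a) R - cball 0 x)
        = emeasure lborel (ball (0::'a) R) - emeasure lborel (cball (0::'a) x)"
      using 2 by (intro emeasure_Diff) (use emeasure_lborel_cball_finite[of "0::'a" x] in auto)
    also have "\<dots> = ennreal (w * R ^ DIM('a) - w * x ^ DIM('a))"
      using 2 R by (simp add: ball cball ennreal_minus w0 power_mono mult_left_mono)
    finally show ?thesis using 2 by simp
  next
    case 3
    then have "ball (0::'a) R - cball 0 x = {}" by auto
    then have "emeasure lborel (ball (0::'a) R - cball 0 x) = 0" by (simp only: emeasure_empty)
    moreover have "max 0 (min x R) = R" using 3 R by simp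
    ultimately show ?thesis by simp
  qed
qed

lemma emeasure_power_density_greaterThan:
  fixes c R x :: real
  assumes R: "R > 0" and c: "c \<ge> 0"
  shows "emeasure (density lborel (\<lambda>r. indicator {0..<R} r * ennreal (real d * c * r ^ (d - 1)))) {x<..}
       = ennreal (c * R ^ d - c * (max 0 (min x R)) ^ d)"
proof -
  define a where "a = max 0 (min x R)"
  have "emeasure (density lborel (\<lambda>r. indicator {0..<R} r * ennreal (real d * c * r ^ (d - 1)))) {x<..}
      = (\<integral>\<^sup>+r. indicator {0..<R} r * ennreal (real d * c * r ^ (d - 1)) * indicator {x<..} r \<partial>lborel)"
    by (subst emeasure_density) auto
  also have "\<dots> = (\<integral>\<^sup>+r. indicator {a..R} r * ennreal (c * (real d * r ^ (d - 1))) \<partial>lborel)"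
  proof (rule nn_integral_cong_AE)
    have "AE r in lborel. r \<noteq> a \<and> r \<noteq> R \<and> r \<noteq> 0"
      by (intro AE_conjI AE_lborel_singleton)
    then show "AE r in lborel. indicator {0..<R} r * ennreal (real d * c * r ^ (d - 1)) * indicator {x<..} r
        = indicator {a..R} r * ennreal (c * (real d * r ^ (d - 1)))"
      by eventually_elim (auto simp: a_def indicator_def mult_ac)
  qed
  also have "\<dots> = ennreal (c * (R ^ d - a ^ d))"
  proof -
    have "((\<lambda>r. c * (real d * r ^ (d - 1))) has_integral c * (R ^ d - a ^ d)) {a..R}"
      using R by (intro has_integral_mult_right has_integral_of_nat_mult_power) (simp add: a_def)
    from nn_integral_has_integral_lebesgue[OF _ this] show ?thesis
      using R c by (auto simp: a_def indicator_mult_ennreal)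
  qed
  finally show ?thesis by (simp add: a_def right_diff_distrib)
qed

lemma distr_norm_ball:
  assumes R: "R > 0"
  defines "w \<equiv> measure lborel (ball (0::'a::euclidean_space) 1)"
  shows "distr (density lborel (indicator (ball (0::'a) R))) borel norm
       = density lborel (\<lambda>r. indicator {0..<R} r * ennreal (real DIM('a) * w * r ^ (DIM('a) - 1)))"
    (is "?M1 = ?M2")
proof (rule measure_eqI_lessThan)
  show "sets ?M1 = sets borel" "sets ?M2 = sets borel" by auto
  fix x :: real
  have "emeasure ?M1 {x<..} = emeasure (density lborel (indicator (ball (0::'a) R))) (norm -` {x<..})"
    by (subst emeasure_distr) auto
  also have "\<dots> = (\<integral>\<^sup>+h. indicator (ball (0::'a) R) h * indicator (norm -` {x<..}) h \<partial>lborel)"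
    by (rule emeasure_density) (auto intro!: borel_open open_vimage continuous_intros borel_measurable_indicator)
  also have "\<dots> = (\<integral>\<^sup>+h. indicator (ball (0::'a) R - cball 0 x) h \<partial>lborel)"
    by (rule nn_integral_cong) (auto simp: indicator_def)
  also have "\<dots> = ennreal (w * R ^ DIM('a) - w * (max 0 (min x R)) ^ DIM('a))"
    using emeasure_ball_diff_cball[OF R, of x] by (simp add: w_def)
  finally have M1: "emeasure ?M1 {x<..} = ennreal (w * R ^ DIM('a) - w * (max 0 (min x R)) ^ DIM('a))" .
  then show "emeasure ?M1 {x<..} < \<infinity>" by simp
  show "emeasure ?M1 {x<..} = emeasure ?M2 {x<..}"
    unfolding M1 by (rule emeasure_power_density_greaterThan[OF R, symmetric]) (simp add: w_def)
qed

lemma nn_integral_ball_radial: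
  fixes f :: "real \<Rightarrow> ennreal"
  assumes R: "R > 0" and [measurable]: "f \<in> borel_measurable borel"
  shows "(\<integral>\<^sup>+h. indicator (ball (0::'a::euclidean_space) R) h * f (norm h) \<partial>lborel)
       = (\<integral>\<^sup>+r. indicator {0..<R} r * ennreal (real DIM('a) * measure lborel (ball (0::'a) 1) * r ^ (DIM('a) - 1))
                  * f r \<partial>lborel)"
proof -
  have "(\<integral>\<^sup>+h. indicator (ball (0::'a) R) h * f (norm h) \<partial>lborel)
      = (\<integral>\<^sup>+h. f (norm h) \<partial>density lborel (indicator (ball (0::'a) R)))"
    by (subst nn_integral_density) (auto intro!: borel_open borel_measurable_indicator)
  also have "\<dots> = (\<integral>\<^sup>+r. f r \<partial>distr (density lborel (indicator (ball (0::'a) R))) borel norm)"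
    by (subst nn_integral_distr) auto
  also have "\<dots> = (\<integral>\<^sup>+r. indicator {0..<R} r * ennreal (real DIM('a) * measure lborel (ball (0::'a) 1) * r ^ (DIM('a) - 1))
                      * f r \<partial>lborel)"
    by (simp only: distr_norm_ball[OF R]) (subst nn_integral_density, auto)
  finally show ?thesis .
qed


section \<open>The truncated kernel\<close>

lemma truncation_split_constant_le:
  fixes s L :: real
  assumes s: "1/2 \<le> s" "s < 1" and L: "L \<ge> 2"
  shows "L * ((2/L) powr (2 - 2 * s) / (2 - 2 * s)) + 2 * (2/L) powr (1 - 2 * s) * ln L
       \<le> 1/(1-s) * L powr (2 * s - 1) * ((2 - 2 * s) * ln (2 * L) + 1)"
proof -
  have Lp: "L > 0" using L by simp
  have two_powr_le_one: "2 powr (1 - 2 * s) \<le> 1"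
    using powr_mono[of "1 - 2 * s" 0 "2::real"] s by simp
  have "L powr (2 * s - 1) = L powr (- (1 - 2 * s))" by simp
  also have "\<dots> = 1 / L powr (1 - 2 * s)" by (simp only: powr_minus inverse_eq_divide)
  finally have scaled_powr: "(2/L) powr (1 - 2 * s) = 2 powr (1 - 2 * s) * L powr (2 * s - 1)"
    using Lp by (simp add: powr_divide)
  have scaled_powr_succ: "L * (2/L) powr (2 - 2 * s) = 2 * 2 powr (1 - 2 * s) * L powr (2 * s - 1)"
  proof -
    have "(2/L) powr (2 - 2 * s) = (2/L) powr (1 + (1 - 2 * s))" by simp
    also have "\<dots> = (2/L) * (2/L) powr (1 - 2 * s)"
      using Lp by (simp only: powr_add powr_one_gt_zero_iff) simp
    finally have "(2/L) powr (2 - 2 * s) = (2/L) * (2/L) powr (1 - 2 * s)" .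
    then show ?thesis using Lp by (simp add: scaled_powr)
  qed
  have first: "L * ((2/L) powr (2 - 2 * s) / (2 - 2 * s)) \<le> L powr (2 * s - 1) / (1 - s)"
  proof -
    have "L * ((2/L) powr (2 - 2 * s) / (2 - 2 * s)) = (L * (2/L) powr (2 - 2 * s)) / (2 * (1 - s))"
      by simp
    also have "\<dots> = 2 powr (1 - 2 * s) * L powr (2 * s - 1) / (1 - s)"
      unfolding scaled_powr_succ mult.assoc by (rule mult_divide_mult_cancel_left) simp
    also have "\<dots> \<le> L powr (2 * s - 1) / (1 - s)"
      using s two_powr_le_one by (intro divide_right_mono mult_left_le_one_le) auto
    finally show ?thesis .
  qed
  have second: "2 * (2/L) powr (1 - 2 * s) * ln L \<le> 2 * L powr (2 * s - 1) * ln (2 * L)"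
  proof -
    have "2 * (2/L) powr (1 - 2 * s) * ln L = 2 * (2 powr (1 - 2 * s) * L powr (2 * s - 1)) * ln L"
      by (simp add: scaled_powr)
    also have "\<dots> \<le> 2 * (1 * L powr (2 * s - 1)) * ln (2 * L)"
      using two_powr_le_one L by (intro mult_mono mult_left_mono) auto
    finally show ?thesis by simp
  qed
  have "1/(1-s) * L powr (2 * s - 1) * ((2 - 2 * s) * ln (2 * L) + 1)
      = L powr (2 * s - 1) / (1 - s) + 2 * L powr (2 * s - 1) * ln (2 * L)"
    using s by (simp add: field_simps)
  then show ?thesis using first second by linarith
qed

lemma radial_kernel_le_split:
  fixes s L w r :: real and d :: nat
  assumes s: "1/2 \<le> s" "s < 1" and L: "L > 0" and w: "w \<ge> 0" and d: "d \<ge> 1"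
    and r: "0 \<le> r" "r \<le> 2"
  defines "a \<equiv> 2 / L"
  shows "w * r ^ (d - 1) * (min 2 (L * r) * r / r powr (real d + 2 * s))
      \<le> indicator {0..a} r * (w * L * r powr (1 - 2 * s))
        + indicator {a..2} r * (w * 2 * a powr (1 - 2 * s) * (1 / r))"
proof (cases "r = 0")
  case True
  then show ?thesis using L by (simp add: indicator_def a_def)
next
  case False
  then have rp: "r > 0" using r by simp
  have "r ^ (d - 1) * r = r powr real d"
    using rp d power_minus_mult[of d r] powr_realpow[OF rp, of d] by simp
  then have "r ^ (d - 1) * r / r powr (real d + 2 * s) = r powr (real d - (real d + 2 * s))"
    by (simp only: powr_diff)
  also have "\<dots> = r powr ((1 - 2 * s) - 1)" by (simp add: algebra_simps)
  also have "\<dots> = r powr (1 - 2 * s) / r"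
    using rp by (metis powr_diff powr_one less_imp_le)
  finally have radial_power: "r ^ (d - 1) * r / r powr (real d + 2 * s) = r powr (1 - 2 * s) / r" .
  have lhs: "w * r ^ (d - 1) * (min 2 (L * r) * r / r powr (real d + 2 * s))
      = w * min 2 (L * r) * (r powr (1 - 2 * s) / r)"
  proof -
    have "w * r ^ (d - 1) * (min 2 (L * r) * r / r powr (real d + 2 * s))
        = w * min 2 (L * r) * (r ^ (d - 1) * r / r powr (real d + 2 * s))"
      by (simp add: field_simps)
    then show ?thesis by (simp only: radial_power)
  qed
  show ?thesis
  proof (cases "r \<le> a")
    case True
    then have "min 2 (L * r) = L * r" using L by (simp add: a_def field_simps)
    then show ?thesis using True rp w lhs by (simp add: indicator_def)
  next
    case False
    then have "min 2 (L * r) = 2" using L by (simp add: a_def field_simps)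
    moreover have "r powr (1 - 2 * s) \<le> a powr (1 - 2 * s)"
      using False L s by (intro powr_mono2') (auto simp: a_def)
    ultimately show ?thesis using False r rp w lhs
      by (auto simp: indicator_def divide_right_mono mult_left_mono)
  qed
qed

lemma nn_integral_split_profile:
  fixes a b s c1 c2 :: real
  assumes s: "s < 1" and a: "0 < a" "a \<le> b" and c: "c1 \<ge> 0" "c2 \<ge> 0"
  shows "(\<integral>\<^sup>+r. ennreal (indicator {0..a} r * (c1 * r powr (1 - 2 * s)))
               + ennreal (indicator {a..b} r * (c2 * (1 / r))) \<partial>lborel)
       = ennreal (c1 * (a powr (2 - 2 * s) / (2 - 2 * s)) + c2 * ln (b / a))"
proof -
  have I1: "((\<lambda>r. c1 * r powr (1 - 2 * s)) has_integral c1 * (a powr (1 - 2 * s + 1) / (1 - 2 * s + 1))) {0..a}"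
    using s a by (intro has_integral_mult_right has_integral_powr_from_0) auto
  have "((\<lambda>r. 1 / r) has_integral (ln b - ln a)) {a..b}"
  proof (rule fundamental_theorem_of_calculus)
    fix x assume "x \<in> {a..b}"
    then have "x > 0" using a by auto
    then show "(ln has_vector_derivative 1 / x) (at x within {a..b})"
      by (auto simp: has_real_derivative_iff_has_vector_derivative[symmetric] intro!: derivative_eq_intros)
  qed (use a in simp)
  then have I2: "((\<lambda>r. c2 * (1 / r)) has_integral c2 * (ln b - ln a)) {a..b}"
    by (rule has_integral_mult_right)
  have "(\<integral>\<^sup>+r. ennreal (indicator {0..a} r * (c1 * r powr (1 - 2 * s)))
               + ennreal (indicator {a..b} r * (c2 * (1 / r))) \<partial>lborel)
      = ennreal (c1 * (a powr (1 - 2 * s + 1) / (1 - 2 * s + 1))) + ennreal (c2 * (ln b - ln a))"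
    using nn_integral_has_integral_lebesgue[OF _ I1] nn_integral_has_integral_lebesgue[OF _ I2] a c
    by (subst nn_integral_add) auto
  also have "\<dots> = ennreal (c1 * (a powr (1 - 2 * s + 1) / (1 - 2 * s + 1)) + c2 * (ln b - ln a))"
    using a c s by (intro ennreal_plus[symmetric]) auto
  also have "\<dots> = ennreal (c1 * (a powr (2 - 2 * s) / (2 - 2 * s)) + c2 * ln (b / a))"
    using a by (simp add: ln_div algebra_simps)
  finally show ?thesis .
qed

lemma nn_integral_radial_kernel_le:
  fixes s L w :: real and d :: nat
  assumes s: "1/2 \<le> s" "s < 1" and L: "L \<ge> 2" and w: "w \<ge> 0" and d: "d \<ge> 1"
  shows "(\<integral>\<^sup>+r. indicator {0..<2} r * ennreal (w * r ^ (d - 1))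
                * ennreal (min 2 (L * r) * r / r powr (real d + 2 * s)) \<partial>lborel)
     \<le> ennreal (w * (1/(1-s) * L powr (2 * s - 1) * ((2 - 2 * s) * ln (2 * L) + 1)))"
proof -
  define a where "a = 2 / L"
  have a: "0 < a" "a \<le> 2"
    using L by (auto simp: a_def field_simps)
  have "(\<integral>\<^sup>+r. indicator {0..<2} r * ennreal (w * r ^ (d - 1))
                * ennreal (min 2 (L * r) * r / r powr (real d + 2 * s)) \<partial>lborel)
      \<le> (\<integral>\<^sup>+r. ennreal (indicator {0..a} r * (w * L * r powr (1 - 2 * s)))
               + ennreal (indicator {a..2} r * (w * 2 * a powr (1 - 2 * s) * (1 / r))) \<partial>lborel)"
  proof (rule nn_integral_mono)
    fix r :: real
    show "indicator {0..<2} r * ennreal (w * r ^ (d - 1)) * ennreal (min 2 (L * r) * r / r powr (real d + 2 * s))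
       \<le> ennreal (indicator {0..a} r * (w * L * r powr (1 - 2 * s)))
         + ennreal (indicator {a..2} r * (w * 2 * a powr (1 - 2 * s) * (1 / r)))"
    proof (cases "0 \<le> r \<and> r < 2")
      case True
      have "w * r ^ (d - 1) * (min 2 (L * r) * r / r powr (real d + 2 * s))
          \<le> indicator {0..a} r * (w * L * r powr (1 - 2 * s))
            + indicator {a..2} r * (w * 2 * a powr (1 - 2 * s) * (1 / r))"
        using radial_kernel_le_split[OF s _ w d, of L r] True L unfolding a_def by simp
      moreover have "0 \<le> indicator {0..a} r * (w * L * r powr (1 - 2 * s))"
        "0 \<le> indicator {a..2} r * (w * 2 * a powr (1 - 2 * s) * (1 / r))"
        using w L a by (simp_all add: indicator_def)
      moreover have "0 \<le> w * r ^ (d - 1)" "0 \<le> min 2 (L * r) * r / r powr (real d + 2 * s)"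
        using True w L by simp_all
      ultimately show ?thesis
        using True by (simp add: ennreal_mult[symmetric] ennreal_plus[symmetric] del: ennreal_plus)
    qed simp
  qed
  also have "\<dots> = ennreal (w * L * (a powr (2 - 2 * s) / (2 - 2 * s)) + w * 2 * a powr (1 - 2 * s) * ln (2 / a))"
    using s a w L by (intro nn_integral_split_profile) auto
  also have "\<dots> \<le> ennreal (w * (1/(1-s) * L powr (2 * s - 1) * ((2 - 2 * s) * ln (2 * L) + 1)))"
    using mult_left_mono[OF truncation_split_constant_le[OF s L] w] L
    by (intro ennreal_leI) (simp add: a_def algebra_simps)
  finally show ?thesis .
qed

definition truncated_kernel :: "real \<Rightarrow> real \<Rightarrow> 'a::euclidean_space \<Rightarrow> real" where
  "truncated_kernel L s h =
     indicator (ball 0 2) h * (min 2 (L * norm h) * norm h / norm h powr (real DIM('a) + 2 * s))"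

lemma borel_measurable_truncated_kernel [measurable]:
  "truncated_kernel L s \<in> borel_measurable borel"
proof -
  have [measurable]: "ball (0::'a) 2 \<in> sets borel" by simp
  show ?thesis unfolding truncated_kernel_def by measurable
qed

lemma nn_integral_truncated_kernel_le:
  assumes s: "1/2 \<le> s" "s < 1" and L: "L \<ge> 2"
  shows "(\<integral>\<^sup>+h. ennreal (truncated_kernel L s (h::'a::euclidean_space)) \<partial>lborel)
       \<le> ennreal (1 / (1 - s) * real DIM('a) * measure lborel (ball (0::'a) 1)
                   * L powr (2 * s - 1) * ((2 - 2 * s) * ln (2 * L) + 1))"
proof -
  define w where "w = real DIM('a) * measure lborel (ball (0::'a) 1)"
  have "(\<integral>\<^sup>+h. ennreal (truncated_kernel L s (h::'a)) \<partial>lborel)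
      = (\<integral>\<^sup>+h. indicator (ball (0::'a) 2) h
              * ennreal (min 2 (L * norm h) * norm h / norm h powr (real DIM('a) + 2 * s)) \<partial>lborel)"
    by (simp add: truncated_kernel_def indicator_mult_ennreal)
  also have "\<dots> = (\<integral>\<^sup>+r. indicator {0..<2} r * ennreal (w * r ^ (DIM('a) - 1))
                      * ennreal (min 2 (L * r) * r / r powr (real DIM('a) + 2 * s)) \<partial>lborel)"
    unfolding w_def by (rule nn_integral_ball_radial) auto
  also have "\<dots> \<le> ennreal (w * (1/(1-s) * L powr (2 * s - 1) * ((2 - 2 * s) * ln (2 * L) + 1)))"
    by (rule nn_integral_radial_kernel_le[OF s L]) (auto simp: w_def DIM_positive Suc_le_eq)
  finally show ?thesis by (simp add: w_def mult_ac)
qed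

section \<open>Fundamental theorem of calculus for Lipschitz functions\<close>

lemma vec_nth_one_image_vec: "(\<lambda>x::real^1. x$1) ` vec ` X = X"
  by (force simp: image_iff)

lemma integrable_on_vec1_image_iff:
  fixes f :: "real^1 \<Rightarrow> real"
  shows "f integrable_on (vec ` X) \<longleftrightarrow> (f \<circ> vec) integrable_on X"
proof
  assume "f integrable_on (vec ` X)"
  then obtain y where "(f has_integral y) (vec ` X)" by (auto simp: integrable_on_def)
  from has_integral_vec1_I[OF this] show "(f \<circ> vec) integrable_on X"
    by (auto simp: integrable_on_def vec_nth_one_image_vec)
next
  assume "(f \<circ> vec) integrable_on X"
  then obtain y where "((f \<circ> vec) has_integral y) ((\<lambda>x::real^1. x$1) ` vec ` X)"
    by (auto simp: integrable_on_def vec_nth_one_image_vec)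
  from has_integral_vec1_D[OF this] show "f integrable_on (vec ` X)"
    by (auto simp: integrable_on_def)
qed

lemma integral_vec1_image:
  fixes f :: "real^1 \<Rightarrow> real"
  shows "integral (vec ` X) f = integral X (f \<circ> vec)"
  using integral_vec1_eq[of "vec ` X" f] by (simp add: vec_nth_one_image_vec)

lemma lmeasurable_vec1_image_iff:
  "(vec ` X :: (real^1) set) \<in> lmeasurable \<longleftrightarrow> (X::real set) \<in> lmeasurable"
  using integrable_on_vec1_image_iff[of "\<lambda>x. 1" X] by (simp add: lmeasurable_iff_integrable_on o_def)

lemma measure_vec1_image:
  "(X::real set) \<in> lmeasurable \<Longrightarrow> measure lebesgue (vec ` X :: (real^1) set) = measure lebesgue X"
  using lmeasure_integral[of X] lmeasure_integral[of "vec ` X :: (real^1) set"] lmeasurable_vec1_image_iff[of X]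
  by (simp add: integral_vec1_image o_def)

text \<open>The one-dimensional case of \<open>measure_differentiable_image\<close>, transported from \<open>real^1\<close>.\<close>

lemma measure_differentiable_image_real:
  fixes \<phi> \<phi>' :: "real \<Rightarrow> real"
  assumes S: "S \<in> lmeasurable"
    and der: "\<And>t. t \<in> S \<Longrightarrow> (\<phi> has_real_derivative \<phi>' t) (at t within S)"
    and int: "(\<lambda>t. \<bar>\<phi>' t\<bar>) integrable_on S"
  shows "\<phi> ` S \<in> lmeasurable" "measure lebesgue (\<phi> ` S) \<le> integral S (\<lambda>t. \<bar>\<phi>' t\<bar>)"
proof -
  let ?f = "\<lambda>v::real^1. vec (\<phi> (v$1)) :: real^1"
  let ?S = "vec ` S :: (real^1) set"
  have Sv: "?S \<in> lmeasurable" using S lmeasurable_vec1_image_iff by blast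
  have derv: "(?f has_derivative (*\<^sub>R) (\<phi>' (x$1))) (at x within ?S)" if "x \<in> ?S" for x
  proof -
    obtain t where t: "t \<in> S" "x = vec t" using \<open>x \<in> ?S\<close> by auto
    have "(\<phi> has_derivative (\<lambda>x. x * \<phi>' t)) (at t within S)"
      using der[OF t(1)] by (simp add: has_field_derivative_def mult_commute_abs)
    from has_derivative_vector_1[of \<phi> \<phi>' t S, OF this] show ?thesis using t by simp
  qed
  have intdet: "(\<lambda>x. \<bar>det (matrix ((*\<^sub>R) (\<phi>' (x$1)) :: real^1 \<Rightarrow> real^1))\<bar>) integrable_on ?S"
    unfolding integrable_on_vec1_image_iff using int by (simp add: o_def)
  have eq: "?f ` ?S = vec ` (\<phi> ` S)" by (auto simp: image_image)
  note image = m_diff_image_weak[OF Sv derv intdet]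
  show m: "\<phi> ` S \<in> lmeasurable"
    using image unfolding eq lmeasurable_vec1_image_iff by blast
  show "measure lebesgue (\<phi> ` S) \<le> integral S (\<lambda>t. \<bar>\<phi>' t\<bar>)"
    using image unfolding eq measure_vec1_image[OF m] integral_vec1_image by (simp add: o_def)
qed

lemma abs_diff_le_measure_image:
  fixes \<phi> :: "real \<Rightarrow> real"
  assumes "a \<le> b" and cont: "continuous_on {a..b} \<phi>"
  shows "\<bar>\<phi> b - \<phi> a\<bar> \<le> measure lebesgue (\<phi> ` {a..b})"
proof -
  have "connected (\<phi> ` {a..b})" by (rule connected_continuous_image[OF cont]) auto
  then have "convex (\<phi> ` {a..b})" by (simp add: is_interval_connected_1[symmetric] is_interval_convex_1)
  then have "closed_segment (\<phi> a) (\<phi> b) \<subseteq> \<phi> ` {a..b}"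
    by (rule closed_segment_subset[rotated 2]) (use \<open>a \<le> b\<close> in auto)
  moreover have "\<phi> ` {a..b} \<in> lmeasurable"
    by (intro lmeasurable_compact compact_continuous_image cont) auto
  ultimately have "measure lebesgue (closed_segment (\<phi> a) (\<phi> b)) \<le> measure lebesgue (\<phi> ` {a..b})"
    by (intro measure_mono_fmeasurable) auto
  then show ?thesis by (simp add: closed_segment_eq_real_ivl split: if_splits)
qed

lemma negligible_lipschitz_on_image:
  fixes f :: "'M::euclidean_space \<Rightarrow> 'N::euclidean_space"
  assumes "DIM('M) \<le> DIM('N)" and lip: "B-lipschitz_on S f" and "negligible N" "N \<subseteq> S"
  shows "negligible (f ` N)"
proof (rule negligible_locally_Lipschitz_image[OF assms(1,3)])
  fix x assume x: "x \<in> N"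
  show "\<exists>T B. open T \<and> x \<in> T \<and> (\<forall>y\<in>N \<inter> T. norm (f y - f x) \<le> B * norm (y - x))"
  proof (intro exI conjI ballI)
    fix y assume "y \<in> N \<inter> UNIV"
    with lipschitz_onD[OF lip] x \<open>N \<subseteq> S\<close> show "norm (f y - f x) \<le> B * norm (y - x)"
      by (auto simp: dist_norm)
  qed auto
qed

text \<open>Off the null set \<open>Z\<close> the image is controlled by the change of variables estimate; on \<open>Z\<close>
  the Lipschitz condition makes it negligible.\<close>

lemma measure_lipschitz_image_le_integral:
  fixes \<phi> \<phi>' :: "real \<Rightarrow> real"
  assumes Z: "Z \<in> null_sets lborel"
    and lip: "B-lipschitz_on {a..b} \<phi>"
    and der: "\<And>t. t \<in> {a<..<b} - Z \<Longrightarrow> (\<phi> has_real_derivative \<phi>' t) (at t)"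
    and int: "(\<lambda>t. \<bar>\<phi>' t\<bar>) absolutely_integrable_on {a..b}"
  shows "measure lebesgue (\<phi> ` {a..b}) \<le> integral {a..b} (\<lambda>t. \<bar>\<phi>' t\<bar>)"
proof -
  define A where "A = {a<..<b} - Z"
  define N where "N = {a..b} \<inter> (Z \<union> {a, b})"
  have Zs: "Z \<in> sets borel" using Z by (auto simp: null_sets_def)
  have A_leb: "A \<in> sets lebesgue" unfolding A_def using Zs by auto
  have A_lm: "A \<in> lmeasurable"
    by (rule bounded_set_imp_lmeasurable[OF _ A_leb]) (rule bounded_subset[of "{a..b}"], auto simp: A_def)
  have intA: "(\<lambda>t. \<bar>\<phi>' t\<bar>) integrable_on A"
    by (rule set_lebesgue_integral_eq_integral(1)[OF set_integrable_subset[OF int A_leb]])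
       (auto simp: A_def)
  have derA: "(\<phi> has_real_derivative \<phi>' t) (at t within A)" if "t \<in> A" for t
    using der[of t] that by (auto simp: A_def intro: DERIV_subset)
  note imA = measure_differentiable_image_real[OF A_lm derA intA]
  have "N \<in> null_sets lborel"
  proof -
    have "Z \<union> {a, b} \<in> null_sets lborel"
      using Z finite_imp_null_set_lborel[of "{a, b}"] by (intro null_sets.Un) auto
    then show ?thesis unfolding N_def by (rule null_sets_subset) (use Zs in auto)
  qed
  then have "negligible N" unfolding negligible_iff_null_sets by (rule null_sets_completionI)
  then have "negligible (\<phi> ` N)"
    using negligible_lipschitz_on_image[OF _ lip, of N] by (auto simp: N_def)
  then have negim: "\<phi> ` N \<in> null_sets lebesgue" using negligible_iff_null_sets by blast
  have "{a..b} \<subseteq> A \<union> N" by (auto simp: A_def N_def)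
  then have "\<phi> ` {a..b} \<subseteq> \<phi> ` A \<union> \<phi> ` N" by blast
  moreover have "\<phi> ` {a..b} \<in> lmeasurable"
    by (intro lmeasurable_compact compact_continuous_image lipschitz_on_continuous_on[OF lip]) auto
  ultimately have "measure lebesgue (\<phi> ` {a..b}) \<le> measure lebesgue (\<phi> ` A \<union> \<phi> ` N)"
    by (intro measure_mono_fmeasurable fmeasurable.Un imA(1) fmeasurableI_null_sets negim) (auto dest: fmeasurableD)
  also have "\<dots> = measure lebesgue (\<phi> ` A)"
    using imA(1) negim by (intro measure_Un_null_set) auto
  also have "\<dots> \<le> integral A (\<lambda>t. \<bar>\<phi>' t\<bar>)" by (rule imA(2))
  also have "\<dots> \<le> integral {a..b} (\<lambda>t. \<bar>\<phi>' t\<bar>)"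
    using intA set_lebesgue_integral_eq_integral(1)[OF int]
    by (intro integral_subset_le) (auto simp: A_def)
  finally show ?thesis .
qed

lemma lipschitz_abs_diff_le_nn_integral_deriv:
  fixes \<phi> \<phi>' :: "real \<Rightarrow> real"
  assumes Z: "Z \<in> null_sets lborel" and "a \<le> b"
    and lip: "B-lipschitz_on {a..b} \<phi>"
    and der: "\<And>t. t \<in> {a<..<b} - Z \<Longrightarrow> (\<phi> has_real_derivative \<phi>' t) (at t)"
    and [measurable]: "\<phi>' \<in> borel_measurable borel"
  shows "ennreal \<bar>\<phi> b - \<phi> a\<bar> \<le> (\<integral>\<^sup>+t. indicator {a..b} t * ennreal \<bar>\<phi>' t\<bar> \<partial>lborel)"
proof (cases "(\<integral>\<^sup>+t. indicator {a..b} t * ennreal \<bar>\<phi>' t\<bar> \<partial>lborel) = \<infinity>")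
  case False
  have "integrable lborel (\<lambda>t. indicator {a..b} t *\<^sub>R \<bar>\<phi>' t\<bar>)"
  proof (rule integrableI_bounded)
    have "(\<integral>\<^sup>+t. ennreal (norm (indicator {a..b} t *\<^sub>R \<bar>\<phi>' t\<bar>)) \<partial>lborel)
        = (\<integral>\<^sup>+t. indicator {a..b} t * ennreal \<bar>\<phi>' t\<bar> \<partial>lborel)"
      by (intro nn_integral_cong) (auto simp: indicator_def)
    then show "(\<integral>\<^sup>+t. ennreal (norm (indicator {a..b} t *\<^sub>R \<bar>\<phi>' t\<bar>)) \<partial>lborel) < \<infinity>"
      using False by (simp add: less_top)
  qed measurable
  then have int: "(\<lambda>t. \<bar>\<phi>' t\<bar>) absolutely_integrable_on {a..b}"
    using integrable_completion[of "\<lambda>t. indicator {a..b} t *\<^sub>R \<bar>\<phi>' t\<bar>" lborel]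
    by (simp add: set_integrable_def)
  have "\<bar>\<phi> b - \<phi> a\<bar> \<le> integral {a..b} (\<lambda>t. \<bar>\<phi>' t\<bar>)"
    using abs_diff_le_measure_image[OF \<open>a \<le> b\<close> lipschitz_on_continuous_on[OF lip]]
      measure_lipschitz_image_le_integral[OF Z lip der int] by linarith
  moreover have "(\<integral>\<^sup>+t. indicator {a..b} t * ennreal \<bar>\<phi>' t\<bar> \<partial>lborel) = ennreal (integral {a..b} (\<lambda>t. \<bar>\<phi>' t\<bar>))"
    using nn_integral_has_integral_lebesgue[OF _ integrable_integral[OF set_lebesgue_integral_eq_integral(1)[OF int]]]
    by (simp add: indicator_mult_ennreal)
  ultimately show ?thesis by (simp add: ennreal_leI)
qed simp

section \<open>Gradients along segments\<close>

lemma has_real_derivative_along_line: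
  fixes u :: "'a::euclidean_space \<Rightarrow> real"
  assumes "(u has_derivative (\<lambda>h. G \<bullet> h)) (at (x + t *\<^sub>R v))"
  shows "((\<lambda>t. u (x + t *\<^sub>R v)) has_real_derivative (G \<bullet> v)) (at t)"
proof -
  have "((\<lambda>t. x + t *\<^sub>R v) has_derivative (\<lambda>s. s *\<^sub>R v)) (at t)"
    by (auto intro!: derivative_eq_intros)
  from diff_chain_at[OF this assms] show ?thesis
    by (simp add: has_field_derivative_def o_def mult_commute_abs)
qed

text \<open>The gradient is only assumed to exist almost everywhere, with no measurability; on the set
  where it exists it coincides with a Borel function, built from difference quotients of the
  extension of \<open>u\<close> by zero.\<close>

lemma borel_measurable_gradient_representative:
  fixes u :: "'a::euclidean_space \<Rightarrow> real" and g :: "'a \<Rightarrow> 'a"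
  assumes S: "open S" and cont: "continuous_on S u"
    and der: "\<And>x. x \<in> S - N \<Longrightarrow> (u has_derivative (\<lambda>h. g x \<bullet> h)) (at x)"
  obtains g' where "g' \<in> borel_measurable borel" "\<And>x. x \<in> S - N \<Longrightarrow> g' x = g x"
proof -
  define v where "v x = indicator S x *\<^sub>R u x" for x
  have [measurable]: "v \<in> borel_measurable borel"
    unfolding v_def by (rule borel_measurable_continuous_on_indicator[OF _ cont]) (simp add: S borel_open)
  define D where "D b x = lim (\<lambda>n. real (Suc n) * (v (x + inverse (real (Suc n)) *\<^sub>R b) - v x))" for b x
  have [measurable]: "D b \<in> borel_measurable borel" for b
    unfolding D_def by measurable
  define g' where "g' x = (\<Sum>b\<in>Basis. D b x *\<^sub>R b)" for x
  have "g' \<in> borel_measurable borel" unfolding g'_def by measurable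
  moreover have "g' x = g x" if x: "x \<in> S - N" for x
  proof -
    have "D b x = g x \<bullet> b" for b
    proof -
      have "open ((\<lambda>t. x + t *\<^sub>R b) -` S)"
        using S by (rule continuous_open_vimage) (intro continuous_intros)
      moreover have "((\<lambda>t. u (x + t *\<^sub>R b)) has_real_derivative (g x \<bullet> b)) (at 0)"
        using has_real_derivative_along_line[of u "g x" x 0 b] der[OF x] by simp
      ultimately have "((\<lambda>t. v (x + t *\<^sub>R b)) has_real_derivative (g x \<bullet> b)) (at 0)"
        using x by (elim has_field_derivative_transform_within_open) (auto simp: v_def)
      then have "((\<lambda>t. (v (x + t *\<^sub>R b) - v x) / t) \<longlongrightarrow> g x \<bullet> b) (at 0)"
        by (simp add: has_field_derivative_iff)
      moreover have "filterlim (\<lambda>n. inverse (real (Suc n))) (at 0) sequentially"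
        unfolding filterlim_at using LIMSEQ_inverse_real_of_nat by auto
      ultimately have "((\<lambda>n. (v (x + inverse (real (Suc n)) *\<^sub>R b) - v x) / inverse (real (Suc n)))
          \<longlongrightarrow> g x \<bullet> b) sequentially"
        by (rule filterlim_compose)
      then show ?thesis unfolding D_def by (intro limI) (simp add: divide_inverse mult.commute)
    qed
    then show ?thesis by (simp add: g'_def euclidean_representation)
  qed
  ultimately show ?thesis using that by blast
qed

lemma segment_point_in_convex:
  assumes "convex S" "x \<in> S" "y \<in> S" "t \<in> {0..1}"
  shows "x + t *\<^sub>R (y - x) \<in> S"
  using convexD_alt[OF assms(1-3), of t] assms(4) by (simp add: algebra_simps)

lemma segment_abs_diff_le_nn_integral:
  fixes u :: "'a::euclidean_space \<Rightarrow> real" and g' :: "'a \<Rightarrow> 'a"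
  assumes S: "convex S" and lip: "K-lipschitz_on S u"
    and [measurable]: "g' \<in> borel_measurable borel"
    and der: "\<And>z. z \<in> S - N \<Longrightarrow> (u has_derivative (\<lambda>h. g' z \<bullet> h)) (at z)"
    and x: "x \<in> S" and y: "y \<in> S"
    and Z: "{t \<in> {0..1}. x + t *\<^sub>R (y - x) \<in> N} \<in> null_sets lborel"
  shows "ennreal \<bar>u y - u x\<bar>
       \<le> (\<integral>\<^sup>+t. indicator {0..1} t * ennreal \<bar>g' (x + t *\<^sub>R (y - x)) \<bullet> (y - x)\<bar> \<partial>lborel)"
proof -
  define p where "p t = x + t *\<^sub>R (y - x)" for t
  define Z' where "Z' = {t \<in> {0..1}. p t \<in> N}"
  have Z': "Z' \<in> null_sets lborel" using Z by (simp add: Z'_def p_def)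
  have pS: "t \<in> {0..1} \<Longrightarrow> p t \<in> S" for t
    unfolding p_def by (rule segment_point_in_convex[OF S x y])
  have lip': "(K * norm (y - x))-lipschitz_on {0..1} (\<lambda>t. u (p t))"
  proof (rule lipschitz_onI)
    fix s t :: real assume "s \<in> {0..1}" "t \<in> {0..1}"
    with lipschitz_onD[OF lip] have "dist (u (p s)) (u (p t)) \<le> K * dist (p s) (p t)"
      using pS by blast
    also have "dist (p s) (p t) = \<bar>s - t\<bar> * norm (y - x)"
      by (simp add: p_def dist_norm scaleR_diff_left[symmetric])
    finally show "dist (u (p s)) (u (p t)) \<le> K * norm (y - x) * dist s t"
      by (simp add: dist_real_def mult_ac)
  qed (use lip in \<open>simp add: lipschitz_on_def\<close>)
  have der': "((\<lambda>t. u (p t)) has_real_derivative g' (p t) \<bullet> (y - x)) (at t)"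
    if "t \<in> {0<..<1} - Z'" for t
    using der[of "p t"] pS[of t] that unfolding p_def Z'_def by (auto intro: has_real_derivative_along_line)
  have "(\<lambda>t. g' (p t) \<bullet> (y - x)) \<in> borel_measurable borel" unfolding p_def by measurable
  from lipschitz_abs_diff_le_nn_integral_deriv[OF Z' _ lip' der' this] show ?thesis
    by (simp add: p_def)
qed

lemma nn_integral_indicator_affine_null:
  fixes N :: "'a::euclidean_space set"
  assumes N: "N \<in> null_sets lborel" and t: "t \<noteq> 0"
  shows "(\<integral>\<^sup>+y. indicator N (c + t *\<^sub>R y) \<partial>lborel) = 0"
proof -
  have [measurable]: "N \<in> sets borel" using N by (auto simp: null_sets_def)
  have "0 = (\<integral>\<^sup>+z. indicator N z \<partial>lborel)" using N by auto
  also have "\<dots> = (\<integral>\<^sup>+z. indicator N z \<partial>density (distr lborel borel (\<lambda>y. c + t *\<^sub>R y)) (\<lambda>_. \<bar>t\<bar> ^ DIM('a)))"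
    using lborel_affine[OF t, of c] by simp
  also have "\<dots> = (\<integral>\<^sup>+y. ennreal (\<bar>t\<bar> ^ DIM('a)) * indicator N (c + t *\<^sub>R y) \<partial>lborel)"
    by (subst nn_integral_density) (auto simp: nn_integral_distr)
  also have "\<dots> = ennreal (\<bar>t\<bar> ^ DIM('a)) * (\<integral>\<^sup>+y. indicator N (c + t *\<^sub>R y) \<partial>lborel)"
    by (rule nn_integral_cmult) measurable
  finally show ?thesis using t by simp
qed

text \<open>Fubini in \<open>(t, y)\<close>: for fixed \<open>t \<in> (0, 1)\<close> the map \<open>y \<mapsto> x + t (y - x)\<close> is an
  invertible affine map, so it pulls null sets back to null sets.\<close>

lemma AE_segment_null_sets:
  fixes N :: "'a::euclidean_space set"
  assumes N: "N \<in> null_sets lborel"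
  shows "AE y in lborel. {t \<in> {0..1}. x + t *\<^sub>R (y - x) \<in> N} \<in> null_sets lborel"
proof -
  have [measurable]: "N \<in> sets borel" using N by (auto simp: null_sets_def)
  define F where "F y t = (indicator {0<..<1} t * indicator N (x + t *\<^sub>R (y - x)) :: ennreal)"
    for y :: 'a and t :: real
  have Fm: "case_prod F \<in> borel_measurable (lborel \<Otimes>\<^sub>M lborel)"
    unfolding F_def by measurable
  have "(\<integral>\<^sup>+y. F y t \<partial>lborel) = 0" for t
  proof (cases "t \<in> {0<..<1}")
    case True
    then have "(\<integral>\<^sup>+y. F y t \<partial>lborel) = (\<integral>\<^sup>+y. indicator N ((x - t *\<^sub>R x) + t *\<^sub>R y) \<partial>lborel)"
      by (intro nn_integral_cong) (simp add: F_def algebra_simps)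
    also have "\<dots> = 0" using True by (intro nn_integral_indicator_affine_null[OF N]) auto
    finally show ?thesis .
  qed (simp add: F_def)
  then have "(\<integral>\<^sup>+y. (\<integral>\<^sup>+t. F y t \<partial>lborel) \<partial>lborel) = 0"
    using lborel_pair.Fubini'[OF Fm] by simp
  then have "AE y in lborel. (\<integral>\<^sup>+t. F y t \<partial>lborel) = 0"
    by (subst (asm) nn_integral_0_iff_AE) (use Fm in measurable)
  then show ?thesis
  proof eventually_elim
    fix y assume y: "(\<integral>\<^sup>+t. F y t \<partial>lborel) = 0"
    define T where "T = {t \<in> {0<..<1}. x + t *\<^sub>R (y - x) \<in> N}"
    have [measurable]: "T \<in> sets borel" unfolding T_def by measurable
    have "(\<integral>\<^sup>+t. F y t \<partial>lborel) = (\<integral>\<^sup>+t. indicator T t \<partial>lborel)"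
      by (intro nn_integral_cong) (simp add: F_def T_def indicator_def)
    then have "emeasure lborel T = (\<integral>\<^sup>+t. F y t \<partial>lborel)" by simp
    then have "T \<union> {0, 1} \<in> null_sets lborel"
      using y finite_imp_null_set_lborel[of "{0, 1::real}"] by (intro null_sets.Un) auto
    then show "{t \<in> {0..1}. x + t *\<^sub>R (y - x) \<in> N} \<in> null_sets lborel"
      by (rule null_sets_subset) (auto simp: T_def)
  qed
qed

lemma nn_integral_lborel_translate:
  fixes f :: "'a::euclidean_space \<Rightarrow> ennreal"
  assumes [measurable]: "f \<in> borel_measurable borel"
  shows "(\<integral>\<^sup>+y. f (c + y) \<partial>lborel) = (\<integral>\<^sup>+y. f y \<partial>lborel)"
proof -
  have "(\<integral>\<^sup>+y. f y \<partial>lborel) = (\<integral>\<^sup>+y. f y \<partial>distr lborel borel ((+) c))"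
    by (simp add: lborel_distr_plus)
  also have "\<dots> = (\<integral>\<^sup>+y. f (c + y) \<partial>lborel)"
    by (subst nn_integral_distr) auto
  finally show ?thesis ..
qed

lemma nn_integral_kernel_segment_integral:
  fixes K G :: "'a::euclidean_space \<Rightarrow> ennreal"
  assumes [measurable]: "K \<in> borel_measurable borel" "G \<in> borel_measurable borel"
  shows "(\<integral>\<^sup>+x. \<integral>\<^sup>+y. K (y - x) * (\<integral>\<^sup>+t. indicator {0..1} t * G (x + t *\<^sub>R (y - x)) \<partial>lborel) \<partial>lborel \<partial>lborel)
       = integral\<^sup>N lborel K * integral\<^sup>N lborel G"
proof -
  define F where "F x h = K h * (\<integral>\<^sup>+t. indicator {0..1::real} t * G (x + t *\<^sub>R h) \<partial>lborel)" for x h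
  have Fm: "case_prod F \<in> borel_measurable (lborel \<Otimes>\<^sub>M lborel)"
    unfolding F_def by measurable
  have shift: "(\<integral>\<^sup>+y. F x (y - x) \<partial>lborel) = (\<integral>\<^sup>+h. F x h \<partial>lborel)" for x
    using nn_integral_lborel_translate[of "F x" "- x"] Fm by simp
  have average: "(\<integral>\<^sup>+x. F x h \<partial>lborel) = K h * integral\<^sup>N lborel G" for h
  proof -
    define f where "f x t = indicator {0..1::real} t * G (x + t *\<^sub>R h)" for x t
    have fm: "case_prod f \<in> borel_measurable (lborel \<Otimes>\<^sub>M lborel)" unfolding f_def by measurable
    have "(\<integral>\<^sup>+x. F x h \<partial>lborel) = K h * (\<integral>\<^sup>+x. \<integral>\<^sup>+t. f x t \<partial>lborel \<partial>lborel)"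
      unfolding F_def f_def by (rule nn_integral_cmult) measurable
    also have "(\<integral>\<^sup>+x. \<integral>\<^sup>+t. f x t \<partial>lborel \<partial>lborel) = (\<integral>\<^sup>+t. \<integral>\<^sup>+x. f x t \<partial>lborel \<partial>lborel)"
      by (rule lborel_pair.Fubini'[OF fm, symmetric])
    also have "\<dots> = (\<integral>\<^sup>+t. indicator {0..1::real} t * integral\<^sup>N lborel G \<partial>lborel)"
    proof (rule nn_integral_cong)
      fix t :: real
      have "(\<integral>\<^sup>+x. f x t \<partial>lborel) = indicator {0..1::real} t * (\<integral>\<^sup>+x. G (t *\<^sub>R h + x) \<partial>lborel)"
        unfolding f_def by (subst nn_integral_cmult[symmetric]) (auto simp: add.commute)
      then show "(\<integral>\<^sup>+x. f x t \<partial>lborel) = indicator {0..1::real} t * integral\<^sup>N lborel G"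
        by (simp add: nn_integral_lborel_translate)
    qed
    also have "\<dots> = integral\<^sup>N lborel G"
      by (subst nn_integral_multc) auto
    finally show ?thesis .
  qed
  have "(\<integral>\<^sup>+x. \<integral>\<^sup>+y. F x (y - x) \<partial>lborel \<partial>lborel) = (\<integral>\<^sup>+x. \<integral>\<^sup>+h. F x h \<partial>lborel \<partial>lborel)"
    by (simp only: shift)
  also have "\<dots> = (\<integral>\<^sup>+h. \<integral>\<^sup>+x. F x h \<partial>lborel \<partial>lborel)"
    by (rule lborel_pair.Fubini'[OF Fm, symmetric])
  also have "\<dots> = integral\<^sup>N lborel K * integral\<^sup>N lborel G"
    by (simp add: average nn_integral_multc)
  finally show ?thesis unfolding F_def .
qed

lemma segment_abs_diff_le_gradient_integral:
  fixes u :: "'a::euclidean_space \<Rightarrow> real" and g' :: "'a \<Rightarrow> 'a"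
  assumes S: "convex S" and lip: "K-lipschitz_on S u"
    and [measurable]: "g' \<in> borel_measurable borel" "S \<in> sets borel"
    and der: "\<And>z. z \<in> S - N \<Longrightarrow> (u has_derivative (\<lambda>h. g' z \<bullet> h)) (at z)"
    and x: "x \<in> S" and y: "y \<in> S"
    and Z: "{t \<in> {0..1}. x + t *\<^sub>R (y - x) \<in> N} \<in> null_sets lborel"
  shows "ennreal \<bar>u y - u x\<bar>
       \<le> (\<integral>\<^sup>+t. indicator {0..1} t * (indicator S (x + t *\<^sub>R (y - x)) * ennreal (norm (g' (x + t *\<^sub>R (y - x)))))
             \<partial>lborel) * ennreal (norm (y - x))"
proof -
  let ?p = "\<lambda>t. x + t *\<^sub>R (y - x)"
  have "(\<integral>\<^sup>+t. indicator {0..1} t * ennreal \<bar>g' (?p t) \<bullet> (y - x)\<bar> \<partial>lborel)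
      \<le> (\<integral>\<^sup>+t. indicator {0..1} t * (indicator S (?p t) * ennreal (norm (g' (?p t)))) * ennreal (norm (y - x)) \<partial>lborel)"
  proof (intro nn_integral_mono)
    fix t :: real
    have "\<bar>g' (?p t) \<bullet> (y - x)\<bar> \<le> norm (g' (?p t)) * norm (y - x)" by (rule Cauchy_Schwarz_ineq2)
    then show "indicator {0..1} t * ennreal \<bar>g' (?p t) \<bullet> (y - x)\<bar>
        \<le> indicator {0..1} t * (indicator S (?p t) * ennreal (norm (g' (?p t)))) * ennreal (norm (y - x))"
      using segment_point_in_convex[OF S x y, of t]
      by (cases "t \<in> {0..1}") (simp_all add: ennreal_mult[symmetric] ennreal_leI)
  qed
  also have "\<dots> = (\<integral>\<^sup>+t. indicator {0..1} t * (indicator S (?p t) * ennreal (norm (g' (?p t)))) \<partial>lborel)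
                 * ennreal (norm (y - x))"
    by (rule nn_integral_multc) measurable
  finally show ?thesis
    using segment_abs_diff_le_nn_integral[OF S lip _ der x y Z] by (auto elim: order_trans)
qed

lemma segment_abs_diff_le_gradient_bound:
  fixes u :: "'a::euclidean_space \<Rightarrow> real" and g' :: "'a \<Rightarrow> 'a"
  assumes S: "convex S" and lip: "K-lipschitz_on S u"
    and [measurable]: "g' \<in> borel_measurable borel"
    and der: "\<And>z. z \<in> S - N \<Longrightarrow> (u has_derivative (\<lambda>h. g' z \<bullet> h)) (at z)"
    and bnd: "\<And>z. z \<in> S - N \<Longrightarrow> norm (g' z) \<le> L" and L: "L \<ge> 0"
    and x: "x \<in> S" and y: "y \<in> S"
    and Z: "{t \<in> {0..1}. x + t *\<^sub>R (y - x) \<in> N} \<in> null_sets lborel"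
  shows "\<bar>u y - u x\<bar> \<le> L * norm (y - x)"
proof -
  let ?p = "\<lambda>t. x + t *\<^sub>R (y - x)"
  have "(\<integral>\<^sup>+t. indicator {0..1} t * ennreal \<bar>g' (?p t) \<bullet> (y - x)\<bar> \<partial>lborel)
      \<le> (\<integral>\<^sup>+(t::real). indicator {0..1} t * ennreal (L * norm (y - x)) \<partial>lborel)"
  proof (rule nn_integral_mono_AE)
    show "AE t in lborel. indicator {0..1} t * ennreal \<bar>g' (?p t) \<bullet> (y - x)\<bar>
        \<le> indicator {0..1} t * ennreal (L * norm (y - x))"
      using AE_not_in[OF Z]
    proof eventually_elim
      fix t assume t: "t \<notin> {t \<in> {0..1}. ?p t \<in> N}"
      show "indicator {0..1} t * ennreal \<bar>g' (?p t) \<bullet> (y - x)\<bar> \<le> indicator {0..1} t * ennreal (L * norm (y - x))"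
      proof (cases "t \<in> {0..1}")
        case True
        then have "norm (g' (?p t)) \<le> L" using t segment_point_in_convex[OF S x y] by (intro bnd) auto
        then have "\<bar>g' (?p t) \<bullet> (y - x)\<bar> \<le> L * norm (y - x)"
          using Cauchy_Schwarz_ineq2[of "g' (?p t)" "y - x"] by (meson mult_right_mono norm_ge_zero order_trans)
        then show ?thesis using True by (simp add: ennreal_leI)
      qed simp
    qed
  qed
  also have "\<dots> = ennreal (L * norm (y - x))"
    by (subst nn_integral_multc) auto
  finally have "ennreal \<bar>u y - u x\<bar> \<le> ennreal (L * norm (y - x))"
    using segment_abs_diff_le_nn_integral[OF S lip _ der x y Z] by (auto elim: order_trans)
  then show ?thesis using L by (simp add: ennreal_le_iff)
qed

section \<open>The Gagliardo seminorm\<close>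

lemma sq_diff_quotient_le_truncated_kernel:
  fixes u :: "'a::euclidean_space \<Rightarrow> real" and g' :: "'a \<Rightarrow> 'a"
  assumes lip: "K-lipschitz_on (ball 0 1) u" and bnd: "\<And>z. z \<in> ball 0 1 \<Longrightarrow> \<bar>u z\<bar> \<le> 1"
    and [measurable]: "g' \<in> borel_measurable borel"
    and der: "\<And>z. z \<in> ball 0 1 - N \<Longrightarrow> (u has_derivative (\<lambda>h. g' z \<bullet> h)) (at z)"
    and gbnd: "\<And>z. z \<in> ball 0 1 - N \<Longrightarrow> norm (g' z) \<le> L" and L: "L \<ge> 0"
    and x: "x \<in> ball 0 1" and y: "y \<in> ball 0 1"
    and Z: "{t \<in> {0..1}. x + t *\<^sub>R (y - x) \<in> N} \<in> null_sets lborel"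
  shows "ennreal (\<bar>u x - u y\<bar>^2 / norm (x - y) powr (real DIM('a) + 2 * s))
       \<le> ennreal (truncated_kernel L s (y - x))
         * (\<integral>\<^sup>+t. indicator {0..1} t
                  * (indicator (ball 0 1) (x + t *\<^sub>R (y - x)) * ennreal (norm (g' (x + t *\<^sub>R (y - x))))) \<partial>lborel)"
    (is "_ \<le> _ * ?I")
proof -
  define q where "q = \<bar>u x - u y\<bar>"
  define r where "r = norm (y - x)"
  define P where "P = r powr (real DIM('a) + 2 * s)"
  define m where "m = min 2 (L * r)"
  have q0: "0 \<le> q" and r0: "0 \<le> r" and P0: "0 \<le> P" and m0: "0 \<le> m"
    using L by (simp_all add: q_def r_def P_def m_def)
  have "q \<le> 2" using bnd[OF x] bnd[OF y] by (simp add: q_def)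
  moreover have "q \<le> L * r"
    using segment_abs_diff_le_gradient_bound[OF convex_ball lip _ der gbnd L x y Z]
    by (simp add: q_def r_def abs_minus_commute)
  ultimately have qm: "q \<le> m" by (simp add: m_def)
  have qI: "ennreal q \<le> ?I * ennreal r"
    using segment_abs_diff_le_gradient_integral[OF convex_ball lip _ _ der x y Z]
    by (simp add: q_def r_def abs_minus_commute)
  have "norm (y - x) < 2"
    using x y norm_triangle_ineq4[of y x] by simp
  then have kernel: "truncated_kernel L s (y - x) = m * r / P"
    by (simp add: truncated_kernel_def m_def r_def P_def)
  have "q ^ 2 \<le> q * m" using qm q0 by (simp add: power2_eq_square mult_left_mono)
  then have "q ^ 2 / P \<le> q * (m / P)" using P0 by (simp add: divide_right_mono)
  then have "ennreal (q ^ 2 / P) \<le> ennreal (q * (m / P))" by (rule ennreal_leI)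
  also have "\<dots> = ennreal q * ennreal (m / P)" using q0 by (rule ennreal_mult')
  also have "\<dots> \<le> ?I * ennreal r * ennreal (m / P)"
    by (rule mult_right_mono[OF qI]) simp
  also have "\<dots> = ennreal (m * r / P) * ?I"
  proof -
    have "?I * ennreal r * ennreal (m / P) = (ennreal r * ennreal (m / P)) * ?I"
      by (simp only: ac_simps)
    also have "ennreal r * ennreal (m / P) = ennreal (m * r / P)"
      using r0 m0 P0 by (simp add: ennreal_mult[symmetric])
    finally show ?thesis .
  qed
  finally show ?thesis
    unfolding kernel q_def P_def r_def by (simp only: norm_minus_commute)
qed

lemma gagliardo_le_kernel_segment_integral:
  fixes u :: "'a::euclidean_space \<Rightarrow> real" and g' :: "'a \<Rightarrow> 'a"
  assumes lip: "K-lipschitz_on (ball 0 1) u" and bnd: "\<And>z. z \<in> ball 0 1 \<Longrightarrow> \<bar>u z\<bar> \<le> 1"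
    and [measurable]: "g' \<in> borel_measurable borel" and N: "N \<in> null_sets lborel"
    and der: "\<And>z. z \<in> ball 0 1 - N \<Longrightarrow> (u has_derivative (\<lambda>h. g' z \<bullet> h)) (at z)"
    and gbnd: "\<And>z. z \<in> ball 0 1 - N \<Longrightarrow> norm (g' z) \<le> L" and L: "L \<ge> 0"
  defines "G z \<equiv> indicator (ball 0 1) z * ennreal (norm (g' z))"
  shows "(\<integral>\<^sup>+ x \<in> ball 0 1. (\<integral>\<^sup>+ y \<in> ball 0 1.
            ennreal (\<bar>u x - u y\<bar>^2 / norm (x - y) powr (real DIM('a) + 2 * s)) \<partial>lborel) \<partial>lborel)
       \<le> (\<integral>\<^sup>+x. \<integral>\<^sup>+y. ennreal (truncated_kernel L s (y - x))
                 * (\<integral>\<^sup>+t. indicator {0..1} t * G (x + t *\<^sub>R (y - x)) \<partial>lborel) \<partial>lborel \<partial>lborel)"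
proof (rule nn_integral_mono)
  fix x :: 'a
  show "(\<integral>\<^sup>+ y \<in> ball 0 1. ennreal (\<bar>u x - u y\<bar>^2 / norm (x - y) powr (real DIM('a) + 2 * s)) \<partial>lborel)
          * indicator (ball 0 1) x
      \<le> (\<integral>\<^sup>+y. ennreal (truncated_kernel L s (y - x))
                 * (\<integral>\<^sup>+t. indicator {0..1} t * G (x + t *\<^sub>R (y - x)) \<partial>lborel) \<partial>lborel)"
  proof (cases "x \<in> ball 0 1")
    case x: True
    have "(\<integral>\<^sup>+ y \<in> ball 0 1. ennreal (\<bar>u x - u y\<bar>^2 / norm (x - y) powr (real DIM('a) + 2 * s)) \<partial>lborel)
        \<le> (\<integral>\<^sup>+y. ennreal (truncated_kernel L s (y - x))
                 * (\<integral>\<^sup>+t. indicator {0..1} t * G (x + t *\<^sub>R (y - x)) \<partial>lborel) \<partial>lborel)"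
    proof (rule nn_integral_mono_AE)
      show "AE y in lborel. ennreal (\<bar>u x - u y\<bar>^2 / norm (x - y) powr (real DIM('a) + 2 * s)) * indicator (ball 0 1) y
          \<le> ennreal (truncated_kernel L s (y - x)) * (\<integral>\<^sup>+t. indicator {0..1} t * G (x + t *\<^sub>R (y - x)) \<partial>lborel)"
        using AE_segment_null_sets[OF N, of x]
      proof eventually_elim
        case (elim y)
        show ?case
        proof (cases "y \<in> ball 0 1")
          case True
          from sq_diff_quotient_le_truncated_kernel[OF lip bnd _ der gbnd L x True elim] show ?thesis
            using True by (simp add: G_def)
        qed simp
      qed
    qed
    then show ?thesis using x by simp
  qed simp
qed

theorem mainTheorem3:
  fixes u :: "'a::euclidean_space \<Rightarrow> real"
    and g :: "'a \<Rightarrow> 'a"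
    and s L0 :: real
  assumes s_lo: "1/2 \<le> s" and s_hi: "s < 1"
    and L0: "L0 \<ge> 2"
    and lip: "\<exists>K. K-lipschitz_on (ball 0 1) u"
    and bnd: "\<And>x. x \<in> ball 0 1 \<Longrightarrow> \<bar>u x\<bar> \<le> 1"
    and grad: "AE x in lborel. x \<in> ball 0 1 \<longrightarrow> (u has_derivative (\<lambda>h. g x \<bullet> h)) (at x)"
    and grad_bnd: "AE x in lborel. x \<in> ball 0 1 \<longrightarrow> norm (g x) \<le> L0"
  shows "(\<integral>\<^sup>+ x \<in> ball 0 1. (\<integral>\<^sup>+ y \<in> ball 0 1.
            ennreal (\<bar>u x - u y\<bar>^2 / norm (x - y) powr (real DIM('a) + 2 * s)) \<partial>lborel) \<partial>lborel)
         \<le> ennreal (1 / (1 - s) * real DIM('a) * measure lborel (ball (0::'a) 1)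
                    * L0 powr (2 * s - 1) * ((2 - 2 * s) * ln (2 * L0) + 1))
           * (\<integral>\<^sup>+ x \<in> ball 0 1. ennreal (norm (g x)) \<partial>lborel)"
proof -
  obtain K where lipK: "K-lipschitz_on (ball 0 1) u" using lip by blast
  have "AE x in lborel. x \<in> ball 0 1 \<longrightarrow> (u has_derivative (\<lambda>h. g x \<bullet> h)) (at x) \<and> norm (g x) \<le> L0"
    using grad grad_bnd by eventually_elim blast
  then obtain N where N: "N \<in> null_sets lborel"
    and good: "\<And>x. x \<in> ball 0 1 - N \<Longrightarrow> (u has_derivative (\<lambda>h. g x \<bullet> h)) (at x) \<and> norm (g x) \<le> L0"
    by (rule AE_E3) simp
  obtain g' where [measurable]: "g' \<in> borel_measurable borel" and g': "\<And>x. x \<in> ball 0 1 - N \<Longrightarrow> g' x = g x"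
    using borel_measurable_gradient_representative[OF open_ball lipschitz_on_continuous_on[OF lipK], of N g]
      good by blast
  define G where "G z = indicator (ball 0 1) z * ennreal (norm (g' z))" for z :: 'a
  have [measurable]: "G \<in> borel_measurable borel"
    unfolding G_def by (intro borel_measurable_times_ennreal borel_measurable_indicator) auto
  have "(\<integral>\<^sup>+ x \<in> ball 0 1. (\<integral>\<^sup>+ y \<in> ball 0 1.
            ennreal (\<bar>u x - u y\<bar>^2 / norm (x - y) powr (real DIM('a) + 2 * s)) \<partial>lborel) \<partial>lborel)
      \<le> (\<integral>\<^sup>+x. \<integral>\<^sup>+y. ennreal (truncated_kernel L0 s (y - x))
              * (\<integral>\<^sup>+t. indicator {0..1} t * G (x + t *\<^sub>R (y - x)) \<partial>lborel) \<partial>lborel \<partial>lborel)"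
    unfolding G_def
    by (rule gagliardo_le_kernel_segment_integral[OF lipK bnd _ N]) (use good g' L0 in simp_all)
  also have "\<dots> = (\<integral>\<^sup>+h. ennreal (truncated_kernel L0 s (h::'a)) \<partial>lborel) * integral\<^sup>N lborel G"
    by (rule nn_integral_kernel_segment_integral) measurable
  also have "\<dots> \<le> ennreal (1 / (1 - s) * real DIM('a) * measure lborel (ball (0::'a) 1)
                    * L0 powr (2 * s - 1) * ((2 - 2 * s) * ln (2 * L0) + 1)) * integral\<^sup>N lborel G"
    by (intro mult_right_mono nn_integral_truncated_kernel_le s_lo s_hi L0) simp
  also have "integral\<^sup>N lborel G = (\<integral>\<^sup>+ x \<in> ball 0 1. ennreal (norm (g x)) \<partial>lborel)"
    using AE_not_in[OF N] by (intro nn_integral_cong_AE) (auto simp: G_def g' indicator_def)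
  finally show ?thesis .
qed
end
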